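(* In $\mathbb P\Gamma$, the formula $f:(W,V),e:\mathbf N\mid\forall x:\mathbf N.\exists y:\mathbf N.\overline{ev}(e,x,y,f)$ in $\mathbb P\Gamma(W\times\mathbf N)$ has a Skolem arrow for $\mathbf N$; namely the arrow $\epsilon:(W,V)\to\mathbf N$ given by $(g,t)\mapsto t$ satisfies $\exists e:\mathbf N.\forall x.\exists y.\overline{ev}(e,x,y,f)=\forall x.\exists y.\overline{ev}(\epsilon(f),x,y,f)$ in $\mathbb P\Gamma(W)$.
   Context: $\mathbf{PAsm}$ is the category of partitioned assemblies: objects $(P,T)$ with $P$ a set and $T:P\to\mathbb N$; arrows are functions tracked by an index of a partial recursive function. $\mathbf N=(\mathbb N,\mathrm{id})$; $(W,V)$ is the weak exponential of $\mathbf N$ with $\mathbf N$ with $W=\{(g,t)\in\mathbb N^{\mathbb N}\times\mathbb N\mid t\text{ tracks }g\}$, $V(g,t)=t$, $ev((g,t),x)=g(x)$. $\mathbb P\Gamma$ sends $(P,T)$ to the powerset of $P$, acting by inverse image, with set-theoretic quantifiers. $\overline{ev}(e,x,y,f)$ denotes $T(e,x,y)=1\wedge U(y)=ev(f,x)$, where $T,U$ are Kleene's primitive recursive T-predicate and output function. For $\alpha\in P(Y\times B)$, an arrow $\epsilon:Y\to B$ is a Skolem arrow for $B$ in $\alpha$ if $\exists_{pr_1}\alpha=P_{\langle\mathrm{id}_Y,\epsilon\rangle}(\alpha)$. *)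

theory Defs
  imports Main "HOL-Library.Countable" "HOL-Library.Nat_Bijection"
begin

datatype recf = Zf | Sf | Proj nat | Comp recf "recf list" | Prim recf recf | Mn recf

instance recf :: countable by countable_datatype

fun evk :: "nat \<Rightarrow> recf \<Rightarrow> nat list \<Rightarrow> nat option"
and mnk :: "nat \<Rightarrow> recf \<Rightarrow> nat list \<Rightarrow> nat \<Rightarrow> nat option" where
  "evk 0 f xs = None"
| "evk (Suc k) Zf xs = Some 0"
| "evk (Suc k) Sf xs = (case xs of [] \<Rightarrow> None | x # _ \<Rightarrow> Some (Suc x))"
| "evk (Suc k) (Proj i) xs = (if i < length xs then Some (xs ! i) else None)"
| "evk (Suc k) (Comp f gs) xs =
     (case those (map (\<lambda>g. evk k g xs) gs) of None \<Rightarrow> None | Some ys \<Rightarrow> evk k f ys)"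
| "evk (Suc k) (Prim f g) xs =
     (case xs of [] \<Rightarrow> None
      | 0 # ys \<Rightarrow> evk k f ys
      | Suc n # ys \<Rightarrow> (case evk k (Prim f g) (n # ys) of None \<Rightarrow> None
                        | Some r \<Rightarrow> evk k g (r # n # ys)))"
| "evk (Suc k) (Mn f) xs = mnk k f xs 0"
| "mnk 0 f xs y = None"
| "mnk (Suc k) f xs y =
     (case evk k f (y # xs) of None \<Rightarrow> None
      | Some r \<Rightarrow> (if r = 0 then Some y else mnk k f xs (Suc y)))"

definition prog :: "nat \<Rightarrow> recf" where "prog e = from_nat e"

definition kleeneT :: "nat \<Rightarrow> nat \<Rightarrow> nat \<Rightarrow> nat" where
  "kleeneT e x y = (if \<exists>k v. y = prod_encode (k, v) \<and> evk k (prog e) [x] = Some v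
                          \<and> (\<forall>k'<k. evk k' (prog e) [x] = None) then 1 else 0)"

definition kleeneU :: "nat \<Rightarrow> nat" where
  "kleeneU y = snd (prod_decode y)"

definition phi :: "nat \<Rightarrow> nat \<Rightarrow> nat option" where
  "phi e x = (if \<exists>y. kleeneT e x y = 1 then Some (kleeneU (LEAST y. kleeneT e x y = 1)) else None)"

definition tracks_fun :: "nat \<Rightarrow> (nat \<Rightarrow> nat) \<Rightarrow> bool" where
  "tracks_fun t g \<longleftrightarrow> (\<forall>x. phi t x = Some (g x))"

definition pasm_arrow :: "'a set \<Rightarrow> ('a \<Rightarrow> nat) \<Rightarrow> 'b set \<Rightarrow> ('b \<Rightarrow> nat) \<Rightarrow> ('a \<Rightarrow> 'b) \<Rightarrow> bool" where
  "pasm_arrow P TP Q TQ f \<longleftrightarrow> (\<forall>p\<in>P. f p \<in> Q) \<and>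
     (\<exists>a. \<forall>p\<in>P. phi a (TP p) = Some (TQ (f p)))"

definition Wexp :: "((nat \<Rightarrow> nat) \<times> nat) set" where
  "Wexp = {(g, t). tracks_fun t g}"

definition Vexp :: "(nat \<Rightarrow> nat) \<times> nat \<Rightarrow> nat" where
  "Vexp f = snd f"

definition evW :: "(nat \<Rightarrow> nat) \<times> nat \<Rightarrow> nat \<Rightarrow> nat" where
  "evW f x = fst f x"

definition evbar :: "nat \<Rightarrow> nat \<Rightarrow> nat \<Rightarrow> (nat \<Rightarrow> nat) \<times> nat \<Rightarrow> bool" where
  "evbar e x y f \<longleftrightarrow> kleeneT e x y = 1 \<and> kleeneU y = evW f x"

definition exists_pr1 :: "('y \<times> 'b) set \<Rightarrow> 'y set" where
  "exists_pr1 \<alpha> = fst ` \<alpha>"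

definition reindex :: "'x set \<Rightarrow> ('x \<Rightarrow> 'z) \<Rightarrow> 'z set \<Rightarrow> 'x set" where
  "reindex X h \<beta> = {x \<in> X. h x \<in> \<beta>}"

definition skolem_arrow :: "'y set \<Rightarrow> ('y \<Rightarrow> nat) \<Rightarrow> 'b set \<Rightarrow> ('b \<Rightarrow> nat) \<Rightarrow>
    ('y \<times> 'b) set \<Rightarrow> ('y \<Rightarrow> 'b) \<Rightarrow> bool" where
  "skolem_arrow Y TY B TB \<alpha> \<epsilon> \<longleftrightarrow> pasm_arrow Y TY B TB \<epsilon> \<and>
     exists_pr1 \<alpha> = reindex Y (\<lambda>y. (y, \<epsilon> y)) \<alpha>"

end

theory Submission
  imports Defs
begin

text \<open>A point (g, t) of the weak exponential carries its own index t, and t tracking g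
  means precisely that T(t, x, y) = 1 and U(y) = g(x) for some y, for every x. Hence t
  is always a witness for e, so the second projection of W is a Skolem arrow; it is
  tracked by the projection program Proj 0, which realises the identity on codes.\<close>

lemma phi_eq_Some_if_least_fuel:
  assumes halts: "evk k (prog e) [x] = Some v"
    and least: "\<forall>k'<k. evk k' (prog e) [x] = None"
  shows "phi e x = Some v"
proof -
  have T_iff: "kleeneT e x y = 1 \<longleftrightarrow> y = prod_encode (k, v)" for y
  proof
    assume "kleeneT e x y = 1"
    then obtain k' v' where y: "y = prod_encode (k', v')"
      and halts': "evk k' (prog e) [x] = Some v'"
      and least': "\<forall>k''<k'. evk k'' (prog e) [x] = None"
      unfolding kleeneT_def by (auto split: if_splits)
    have "k' = k"
      using halts least halts' least' by (metis linorder_neqE_nat option.distinct(1))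
    then show "y = prod_encode (k, v)" using y halts halts' by simp
  qed (use halts least in \<open>auto simp: kleeneT_def\<close>)
  then have "(LEAST y. kleeneT e x y = 1) = prod_encode (k, v)"
    by (intro Least_equality) auto
  then show ?thesis using T_iff by (auto simp: phi_def kleeneU_def)
qed

lemma phi_Proj0: "phi (to_nat (Proj 0)) x = Some x"
proof (rule phi_eq_Some_if_least_fuel)
  show "evk 1 (prog (to_nat (Proj 0))) [x] = Some x" by (simp add: prog_def)
  show "\<forall>k'<1. evk k' (prog (to_nat (Proj 0))) [x] = None" by simp
qed

lemma phi_eq_SomeD:
  assumes "phi e x = Some v"
  shows "\<exists>y. kleeneT e x y = 1 \<and> kleeneU y = v"
proof -
  have ex: "\<exists>y. kleeneT e x y = 1" and U: "kleeneU (LEAST y. kleeneT e x y = 1) = v"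
    using assms unfolding phi_def by (auto split: if_splits)
  show ?thesis using LeastI_ex[OF ex] U by blast
qed

lemma Wexp_evbar_snd:
  assumes "f \<in> Wexp"
  shows "\<exists>y. evbar (snd f) x y f"
proof -
  obtain g t where f: "f = (g, t)" and "tracks_fun t g"
    using assms by (auto simp: Wexp_def)
  then have "phi t x = Some (g x)" by (simp add: tracks_fun_def)
  then obtain y where "kleeneT t x y = 1" "kleeneU y = g x" by (blast dest: phi_eq_SomeD)
  then show ?thesis using f by (auto simp: evbar_def evW_def)
qed

lemma pasm_arrow_Wexp_snd: "pasm_arrow Wexp Vexp UNIV id snd"
  unfolding pasm_arrow_def Vexp_def using phi_Proj0 by auto

lemma exists_pr1_eq_reindex:
  assumes "fst ` \<alpha> \<subseteq> Y" and "\<And>y b. (y, b) \<in> \<alpha> \<Longrightarrow> (y, \<epsilon> y) \<in> \<alpha>"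
  shows "exists_pr1 \<alpha> = reindex Y (\<lambda>y. (y, \<epsilon> y)) \<alpha>"
  using assms unfolding exists_pr1_def reindex_def by force

theorem lemma4p7:
  defines "\<alpha> \<equiv> {(f, e). f \<in> Wexp \<and> (\<forall>x. \<exists>y. evbar e x y f)}"
  shows "skolem_arrow Wexp Vexp (UNIV :: nat set) id \<alpha> (\<lambda>(g, t). t)
       \<and> {f \<in> Wexp. \<exists>e. \<forall>x. \<exists>y. evbar e x y f}
         = {f \<in> Wexp. \<forall>x. \<exists>y. evbar ((\<lambda>(g, t). t) f) x y f}"
proof -
  have snd_eq: "(\<lambda>(g, t). t) = snd" by auto
  have "exists_pr1 \<alpha> = reindex Wexp (\<lambda>f. (f, snd f)) \<alpha>"
    by (rule exists_pr1_eq_reindex) (auto simp: \<alpha>_def Wexp_evbar_snd)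
  then have "skolem_arrow Wexp Vexp UNIV id \<alpha> snd"
    by (simp add: skolem_arrow_def pasm_arrow_Wexp_snd)
  moreover have "{f \<in> Wexp. \<exists>e. \<forall>x. \<exists>y. evbar e x y f}
      = {f \<in> Wexp. \<forall>x. \<exists>y. evbar (snd f) x y f}"
    using Wexp_evbar_snd by blast
  ultimately show ?thesis unfolding snd_eq by simp
qed

end
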